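(* Let $L\to M$ be a line bundle, let $J$ be a Jacobi structure on $L$ with corresponding Dirac-Jacobi structure $\mathcal{L}_J\subseteq\mathbb{D}L$, and let $\iota\colon N\hookrightarrow M$ be a cosymplectic transversal. Then $$J^\sharp(\mathrm{Ann}(DL_N))\oplus DL_N=DL|_N .$$
   Context: $DL$ is the gauge algebroid of $L$, $J^1L$ the jet bundle, $DL\cong(J^1L)^*\otimes L$, $\mathbb{D}L=DL\oplus J^1L$. A Jacobi structure is $J\in\Gamma(\wedge^2(J^1L)^*\otimes L)$ such that $\{\lambda,\mu\}=J(j^1\lambda,j^1\mu)$ is a Lie bracket; $J^\sharp\colon J^1L\to DL$ is the induced skew map, and $\mathcal{L}_J=\{(J^\sharp\psi,\psi):\psi\in J^1L\}$. For the inclusion $I\colon L_N=L|_N\to L$, $DL_N\subseteq DL|_N$ via $DI$, $\mathrm{Ann}(DL_N)\subseteq J^1L|_N$ its annihilator, and $\mathfrak{B}_I(\mathcal{L}_J)=\{(\Delta,(DI)^*\psi):(DI(\Delta),\psi)\in\mathcal{L}_J\}$. $N$ is a transversal if $DL_N+J^\sharp(J^1L|_N)=DL|_N$, and a cosymplectic transversal if moreover $DL_N\cap\mathfrak{B}_I(\mathcal{L}_J)=\{0\}$. *)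

theory Defs
  imports "HOL-Analysis.Analysis"
begin

(* Fibrewise (pointwise at x in N) linear-algebra model.
   'v  : fibre DL_x of the gauge algebroid (finite-dimensional real vector space)
   'l  : fibre L_x of the line bundle (DIM = 1)
   J^1L_x = Hom(DL_x, L_x)  (since DL = (J^1L)^* (x) L), modelled as linear maps 'v => 'l
   W   : DL_N at x, a subspace of DL_x (via DI). *)

type_synonym ('v, 'l) jet = "'v \<Rightarrow> 'l"

definition jets :: "('v::real_vector, 'l::real_vector) jet set" where
  "jets = {\<psi>. linear \<psi>}"

definition Ann :: "'v::real_vector set \<Rightarrow> ('v, 'l::real_vector) jet set" where
  "Ann W = {\<psi>. linear \<psi> \<and> (\<forall>w\<in>W. \<psi> w = 0)}"

(* J^sharp : J^1L -> DL induced by a skew-symmetric L-valued bilinear form J on J^1L,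
   J(psi, phi) = phi (J^sharp psi). *)
definition jacobi_sharp :: "(('v::real_vector, 'l::real_vector) jet \<Rightarrow> 'v) \<Rightarrow> bool" where
  "jacobi_sharp Js \<longleftrightarrow>
     (\<forall>\<psi> \<phi>. linear \<psi> \<longrightarrow> linear \<phi> \<longrightarrow> Js (\<lambda>v. \<psi> v + \<phi> v) = Js \<psi> + Js \<phi>) \<and>
     (\<forall>\<psi> c. linear \<psi> \<longrightarrow> Js (\<lambda>v. c *\<^sub>R \<psi> v) = c *\<^sub>R Js \<psi>) \<and>
     (\<forall>\<psi> \<phi>. linear \<psi> \<longrightarrow> linear \<phi> \<longrightarrow> \<phi> (Js \<psi>) = - \<psi> (Js \<phi>))"

definition dirac_jacobi :: "(('v::real_vector, 'l::real_vector) jet \<Rightarrow> 'v) \<Rightarrow> ('v \<times> ('v, 'l) jet) set" where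
  "dirac_jacobi Js = {(Js \<psi>, \<psi>) | \<psi>. linear \<psi>}"

(* (DI)^* psi : restriction of psi to DL_N (extended by 0 off W to get a total function) *)
definition restr :: "'v set \<Rightarrow> ('v, 'l::zero) jet \<Rightarrow> ('v, 'l) jet" where
  "restr W \<psi> = (\<lambda>w. if w \<in> W then \<psi> w else 0)"

definition backward_image :: "'v set \<Rightarrow> ('v \<times> ('v, 'l::zero) jet) set \<Rightarrow> ('v \<times> ('v, 'l) jet) set" where
  "backward_image W LL = {(\<Delta>, restr W \<psi>) | \<Delta> \<psi>. \<Delta> \<in> W \<and> (\<Delta>, \<psi>) \<in> LL}"

definition transversal :: "'v::real_vector set \<Rightarrow> (('v, 'l::real_vector) jet \<Rightarrow> 'v) \<Rightarrow> bool" where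
  "transversal W Js \<longleftrightarrow> {w + Js \<psi> | w \<psi>. w \<in> W \<and> linear \<psi>} = UNIV"

definition cosymplectic_transversal :: "'v::real_vector set \<Rightarrow> (('v, 'l::real_vector) jet \<Rightarrow> 'v) \<Rightarrow> bool" where
  "cosymplectic_transversal W Js \<longleftrightarrow> transversal W Js \<and>
     {(\<Delta>, (\<lambda>_. 0)) | \<Delta>. \<Delta> \<in> W} \<inter> backward_image W (dirac_jacobi Js) = {(0, (\<lambda>_. 0))}"

end

theory Submission
  imports Defs
begin

text \<open>Write \<open>U = J\<^sup>\<sharp>(Ann W)\<close>. The cosymplectic condition says exactly that \<open>U \<inter> W = 0\<close>.
  If \<open>U + W\<close> were proper, some nonzero jet \<open>\<psi>\<close> would annihilate both \<open>U\<close> and \<open>W\<close>. Skew-symmetry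
  gives \<open>\<phi>(J\<^sup>\<sharp>\<psi>) = -\<psi>(J\<^sup>\<sharp>\<phi>) = 0\<close> for all \<open>\<phi> \<in> Ann W\<close>, so \<open>J\<^sup>\<sharp>\<psi> \<in> W\<close>, and also \<open>J\<^sup>\<sharp>\<psi> \<in> U\<close>;
  hence \<open>J\<^sup>\<sharp>\<psi> = 0\<close>. Then \<open>\<psi>\<close> kills \<open>W\<close> and, by skew-symmetry again, the whole image of \<open>J\<^sup>\<sharp>\<close>,
  which by transversality is everything: \<open>\<psi> = 0\<close>.\<close>

lemma Ann_antimono: "S \<subseteq> T \<Longrightarrow> Ann T \<subseteq> Ann S"
  by (auto simp: Ann_def)

lemma Ann_separates:
  fixes S :: "'v::euclidean_space set"
  assumes "subspace S" and "v \<notin> S"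
  obtains \<psi> :: "('v, 'l::euclidean_space) jet" where "\<psi> \<in> Ann S" and "\<psi> v \<noteq> 0"
proof -
  obtain y z where y: "y \<in> span S" and z: "\<And>w. w \<in> span S \<Longrightarrow> orthogonal z w"
    and v: "v = y + z" using orthogonal_subspace_decomp_exists[of S v] by blast
  have "y \<in> S" using y assms(1) by (metis span_eq_iff)
  then have "z \<noteq> 0" using assms(2) v by auto
  moreover have "inner z v = inner z z"
    using z[OF y] v by (simp add: orthogonal_def inner_add_right)
  ultimately have zv: "inner z v \<noteq> 0" by simp
  obtain e :: 'l where "e \<in> Basis" using nonempty_Basis by blast
  then have e: "e \<noteq> 0" by (rule nonzero_Basis)
  define \<psi> where "\<psi> x = inner z x *\<^sub>R e" for x
  have "linear \<psi>"
    unfolding \<psi>_def by (intro linearI) (auto simp: inner_add_right scaleR_add_left)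
  moreover have "\<psi> w = 0" if "w \<in> S" for w
    using z[OF span_base[OF that]] by (simp add: \<psi>_def orthogonal_def)
  ultimately have "\<psi> \<in> Ann S" by (simp add: Ann_def)
  moreover have "\<psi> v \<noteq> 0" using zv e by (simp add: \<psi>_def)
  ultimately show ?thesis using that by blast
qed

lemma mem_subspace_iff_Ann:
  fixes W :: "'v::euclidean_space set"
  assumes "subspace W"
  shows "v \<in> W \<longleftrightarrow> (\<forall>\<psi> \<in> (Ann W :: ('v, 'l::euclidean_space) jet set). \<psi> v = 0)"
proof
  show "v \<in> W \<Longrightarrow> \<forall>\<psi> \<in> Ann W. \<psi> v = 0" by (simp add: Ann_def)
  assume annihilated: "\<forall>\<psi> \<in> (Ann W :: ('v, 'l) jet set). \<psi> v = 0"
  show "v \<in> W"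
  proof (rule ccontr)
    assume "v \<notin> W"
    then obtain \<psi> :: "('v, 'l) jet" where "\<psi> \<in> Ann W" and "\<psi> v \<noteq> 0"
      by (rule Ann_separates[OF assms])
    with annihilated show False by blast
  qed
qed

lemma jacobi_sharp_zero:
  fixes Js :: "('v::real_vector, 'l::real_vector) jet \<Rightarrow> 'v"
  assumes "jacobi_sharp Js"
  shows "Js (\<lambda>_. 0) = 0"
proof -
  have "Js (\<lambda>v. 0 *\<^sub>R (0::'l)) = 0 *\<^sub>R Js (\<lambda>_. 0)"
    using assms linear_zero unfolding jacobi_sharp_def by blast
  then show ?thesis by simp
qed

lemma subspace_jacobi_sharp_Ann:
  assumes "jacobi_sharp Js"
  shows "subspace (Js ` Ann W)"
  unfolding subspace_def
proof (intro conjI ballI allI)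
  have "(\<lambda>_. 0) \<in> Ann W" by (simp add: Ann_def linear_zero)
  then show "0 \<in> Js ` Ann W" using jacobi_sharp_zero[OF assms] by (metis image_eqI)
next
  fix x y assume "x \<in> Js ` Ann W" "y \<in> Js ` Ann W"
  then obtain \<psi> \<phi> where "\<psi> \<in> Ann W" "\<phi> \<in> Ann W" and xy: "x = Js \<psi>" "y = Js \<phi>" by blast
  then have "linear \<psi>" "linear \<phi>" and "(\<lambda>v. \<psi> v + \<phi> v) \<in> Ann W"
    by (auto simp: Ann_def intro: linear_compose_add)
  moreover have "x + y = Js (\<lambda>v. \<psi> v + \<phi> v)"
    using assms \<open>linear \<psi>\<close> \<open>linear \<phi>\<close> xy by (simp add: jacobi_sharp_def)
  ultimately show "x + y \<in> Js ` Ann W" by blast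
next
  fix c x assume "x \<in> Js ` Ann W"
  then obtain \<psi> where "\<psi> \<in> Ann W" and x: "x = Js \<psi>" by blast
  then have "linear \<psi>" and "(\<lambda>v. c *\<^sub>R \<psi> v) \<in> Ann W"
    by (auto simp: Ann_def intro: linear_compose_scale_right)
  moreover have "c *\<^sub>R x = Js (\<lambda>v. c *\<^sub>R \<psi> v)"
    using assms \<open>linear \<psi>\<close> x by (simp add: jacobi_sharp_def)
  ultimately show "c *\<^sub>R x \<in> Js ` Ann W" by blast
qed

lemma cosymplectic_transversal_sharp_Ann_Int:
  assumes "jacobi_sharp Js" and "cosymplectic_transversal W Js"
  shows "Js ` Ann W \<inter> W = {0}"
proof -
  have cs: "{(\<Delta>, (\<lambda>_. 0)) | \<Delta>. \<Delta> \<in> W} \<inter> backward_image W (dirac_jacobi Js) = {(0, (\<lambda>_. 0))}"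
    using assms(2) by (simp add: cosymplectic_transversal_def)
  have "a = 0" if "\<psi> \<in> Ann W" "a = Js \<psi>" "a \<in> W" for a \<psi>
  proof -
    have "restr W \<psi> = (\<lambda>_. 0)" using that(1) by (auto simp: restr_def Ann_def)
    moreover have "(a, \<psi>) \<in> dirac_jacobi Js" using that by (auto simp: dirac_jacobi_def Ann_def)
    ultimately have "(a, (\<lambda>_. 0)) \<in> backward_image W (dirac_jacobi Js)"
      using that(3) unfolding backward_image_def by force
    then show "a = 0" using cs that(3) by blast
  qed
  moreover have "0 \<in> Js ` Ann W"
  proof
    show "(\<lambda>_. 0) \<in> Ann W" by (simp add: Ann_def linear_zero)
  qed (simp add: jacobi_sharp_zero[OF assms(1)])
  moreover have "0 \<in> W" using cs by blast
  ultimately show ?thesis by blast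
qed

lemma jacobi_sharp_mem_subspace:
  fixes W :: "'v::euclidean_space set" and Js :: "('v \<Rightarrow> 'l::euclidean_space) \<Rightarrow> 'v"
  assumes "jacobi_sharp Js" and "subspace W"
    and "linear \<psi>" and "\<And>\<phi>. \<phi> \<in> Ann W \<Longrightarrow> \<psi> (Js \<phi>) = 0"
  shows "Js \<psi> \<in> W"
proof -
  have "\<phi> (Js \<psi>) = 0" if "\<phi> \<in> Ann W" for \<phi> :: "('v, 'l) jet"
  proof -
    have "\<phi> (Js \<psi>) = - \<psi> (Js \<phi>)"
      using assms(1,3) that by (simp add: jacobi_sharp_def Ann_def)
    then show ?thesis using assms(4)[OF that] by simp
  qed
  then show ?thesis using mem_subspace_iff_Ann[OF assms(2), where 'l = 'l] by blast
qed

lemma transversal_jacobi_sharp_Ann_eq_0: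
  assumes "jacobi_sharp Js" and "transversal W Js"
    and "\<psi> \<in> Ann W" and "Js \<psi> = 0"
  shows "\<psi> = (\<lambda>_. 0)"
proof
  fix v
  obtain w \<phi> where v: "v = w + Js \<phi>" and "w \<in> W" and "linear \<phi>"
    using assms(2) unfolding transversal_def by blast
  have "linear \<psi>" using assms(3) by (simp add: Ann_def)
  have "\<psi> (Js \<phi>) = - \<phi> (Js \<psi>)"
    using assms(1) \<open>linear \<psi>\<close> \<open>linear \<phi>\<close> by (simp add: jacobi_sharp_def)
  also have "\<dots> = 0" using assms(4) \<open>linear \<phi>\<close> by (simp add: linear_0)
  finally show "\<psi> v = 0"
    using assms(3) \<open>w \<in> W\<close> \<open>linear \<psi>\<close> v by (simp add: Ann_def linear_add)
qed

lemma cosymplectic_transversal_span_sharp_Ann_Un: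
  fixes W :: "'v::euclidean_space set" and Js :: "('v \<Rightarrow> 'l::euclidean_space) \<Rightarrow> 'v"
  assumes "subspace W" and "jacobi_sharp Js" and "cosymplectic_transversal W Js"
  shows "span (Js ` Ann W \<union> W) = UNIV"
proof (rule ccontr)
  let ?U = "Js ` Ann W"
  assume "span (?U \<union> W) \<noteq> UNIV"
  then obtain v where "v \<notin> span (?U \<union> W)" by blast
  then obtain \<psi> :: "('v, 'l) jet" where \<psi>: "\<psi> \<in> Ann (span (?U \<union> W))" and "\<psi> v \<noteq> 0"
    using Ann_separates[OF subspace_span] by blast
  then have "\<psi> \<in> Ann W" and "\<forall>u \<in> ?U. \<psi> u = 0"
    using Ann_antimono[of _ "span (?U \<union> W)"] span_superset by (auto simp: Ann_def)
  then have "Js \<psi> \<in> W" and "Js \<psi> \<in> ?U"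
    using jacobi_sharp_mem_subspace[OF assms(2,1)] by (auto simp: Ann_def)
  then have "Js \<psi> = 0"
    using cosymplectic_transversal_sharp_Ann_Int[OF assms(2,3)] by blast
  then have "\<psi> = (\<lambda>_. 0)"
    using assms(2,3) \<open>\<psi> \<in> Ann W\<close> transversal_jacobi_sharp_Ann_eq_0
    by (auto simp: cosymplectic_transversal_def)
  then show False using \<open>\<psi> v \<noteq> 0\<close> by simp
qed

theorem mainTheorem11:
  fixes W :: "'v::euclidean_space set"
    and Js :: "('v \<Rightarrow> 'l::euclidean_space) \<Rightarrow> 'v"
  assumes "DIM('l) = 1"
    and "subspace W"
    and "jacobi_sharp Js"
    and "cosymplectic_transversal W Js"
  shows "{a + w | a w. a \<in> Js ` Ann W \<and> w \<in> W} = UNIV \<and> Js ` Ann W \<inter> W = {0}"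
proof -
  let ?U = "Js ` Ann W"
  have "span ?U = ?U" using subspace_jacobi_sharp_Ann[OF assms(3)] by (simp add: span_eq_iff)
  moreover have "span W = W" using assms(2) by (simp add: span_eq_iff)
  ultimately have "{a + w | a w. a \<in> ?U \<and> w \<in> W} = span (?U \<union> W)"
    using span_Un[of ?U W] by (simp only:)
  also have "\<dots> = UNIV"
    using assms(2-4) by (rule cosymplectic_transversal_span_sharp_Ann_Un)
  finally show ?thesis
    using cosymplectic_transversal_sharp_Ann_Int[OF assms(3,4)] by simp
qed

end
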